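(* There is a function $f(n)\in\mathcal O(n^5)$ such that in every hedonic diversity game with $n$ agents in which all agents have strict and naturally single-peaked preferences, every sequence of IS deviations satisfying solitary homogeneity that starts from the singleton partition has length at most $f(n)$ (so the dynamics converges).
   Context: A hedonic diversity game (HDG) has agent set $N=R\cup B$ partitioned into red agents $R$ and blue agents $B$, $|N|=n$. Each agent $i$ has a weak order $\succsim_i^F$ over fractions $\{p/q: p\in\{0,\dots,|R|\},q\in[n]\}$, and evaluates a coalition $C\ni i$ by $|R\cap C|/|C|$. Strict: the orders are linear. Naturally single-peaked: for each agent $i$ and fractions $x,y,z$ with $x>y>z$ or $z>y>x$, $x\succ_i^F y$ implies $y\succsim_i^F z$. The singleton partition is $\{\{i\}:i\in N\}$. An IS deviation of agent $i$ from partition $\pi$ to $\pi'$ is a move of $i$ alone from $\pi(i)$ into another coalition of $\pi$ or into a new singleton such that $\pi'(i)\succ_i\pi(i)$ and $\pi'(j)\succsim_j\pi(j)$ for all $j\in\pi'(i)\setminus\{i\}$. A coalition is homogeneous if it is contained in $R$ or in $B$; a deviation of $i$ satisfies solitary homogeneity if, whenever $\pi'(i)$ is homogeneous, $\pi'(i)=\{i\}$. *)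

theory Defs
  imports Complex_Main "HOL-Library.Landau_Symbols"
begin

text \<open>Agents are natural numbers; N is the (finite) agent set, R \<subseteq> N the red agents,
  N - R the blue agents. A preference profile is pref :: nat \<Rightarrow> rat \<Rightarrow> rat \<Rightarrow> bool,
  where pref i x y means x \<succeq>_i y on fractions.\<close>

definition fractions :: "nat set \<Rightarrow> nat set \<Rightarrow> rat set" where
  "fractions N R = {of_nat p / of_nat q | p q. p \<le> card R \<and> 1 \<le> q \<and> q \<le> card N}"

definition weak_order_on :: "rat set \<Rightarrow> (rat \<Rightarrow> rat \<Rightarrow> bool) \<Rightarrow> bool" where
  "weak_order_on F P \<longleftrightarrow>
     (\<forall>x\<in>F. P x x) \<and>
     (\<forall>x\<in>F. \<forall>y\<in>F. \<forall>z\<in>F. P x y \<longrightarrow> P y z \<longrightarrow> P x z) \<and>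
     (\<forall>x\<in>F. \<forall>y\<in>F. P x y \<or> P y x)"

definition strict_pref :: "(rat \<Rightarrow> rat \<Rightarrow> bool) \<Rightarrow> rat \<Rightarrow> rat \<Rightarrow> bool" where
  "strict_pref P x y \<longleftrightarrow> P x y \<and> \<not> P y x"

text \<open>Strict: the weak order is linear (antisymmetric).\<close>
definition linear_order_on' :: "rat set \<Rightarrow> (rat \<Rightarrow> rat \<Rightarrow> bool) \<Rightarrow> bool" where
  "linear_order_on' F P \<longleftrightarrow> weak_order_on F P \<and>
     (\<forall>x\<in>F. \<forall>y\<in>F. P x y \<longrightarrow> P y x \<longrightarrow> x = y)"

definition naturally_single_peaked :: "rat set \<Rightarrow> (rat \<Rightarrow> rat \<Rightarrow> bool) \<Rightarrow> bool" where
  "naturally_single_peaked F P \<longleftrightarrow>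
     (\<forall>x\<in>F. \<forall>y\<in>F. \<forall>z\<in>F. (x > y \<and> y > z \<or> z > y \<and> y > x) \<longrightarrow>
        strict_pref P x y \<longrightarrow> P y z)"

definition strict_nsp_hdg :: "nat set \<Rightarrow> nat set \<Rightarrow> (nat \<Rightarrow> rat \<Rightarrow> rat \<Rightarrow> bool) \<Rightarrow> bool" where
  "strict_nsp_hdg N R pref \<longleftrightarrow> finite N \<and> R \<subseteq> N \<and>
     (\<forall>i\<in>N. linear_order_on' (fractions N R) (pref i) \<and>
             naturally_single_peaked (fractions N R) (pref i))"

definition ratio :: "nat set \<Rightarrow> nat set \<Rightarrow> rat" where
  "ratio R C = of_nat (card (R \<inter> C)) / of_nat (card C)"

definition is_partition :: "nat set \<Rightarrow> nat set set \<Rightarrow> bool" where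
  "is_partition N \<pi> \<longleftrightarrow> {} \<notin> \<pi> \<and> \<Union>\<pi> = N \<and>
     (\<forall>C\<in>\<pi>. \<forall>D\<in>\<pi>. C \<noteq> D \<longrightarrow> C \<inter> D = {})"

definition singleton_partition :: "nat set \<Rightarrow> nat set set" where
  "singleton_partition N = {{i} | i. i \<in> N}"

definition coal :: "nat set set \<Rightarrow> nat \<Rightarrow> nat set" where
  "coal \<pi> i = (THE C. C \<in> \<pi> \<and> i \<in> C)"

definition homogeneous :: "nat set \<Rightarrow> nat set \<Rightarrow> nat set \<Rightarrow> bool" where
  "homogeneous N R C \<longleftrightarrow> C \<subseteq> R \<or> C \<subseteq> N - R"

text \<open>Agent i leaves its coalition and joins T (T \<in> \<pi>, or T = {} meaning a new singleton).\<close>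
definition move :: "nat set set \<Rightarrow> nat \<Rightarrow> nat set \<Rightarrow> nat set set" where
  "move \<pi> i T = (\<pi> - {coal \<pi> i, T}) \<union> (if coal \<pi> i - {i} = {} then {} else {coal \<pi> i - {i}})
                 \<union> {insert i T}"

definition IS_SH_step :: "nat set \<Rightarrow> nat set \<Rightarrow> (nat \<Rightarrow> rat \<Rightarrow> rat \<Rightarrow> bool)
    \<Rightarrow> nat set set \<Rightarrow> nat set set \<Rightarrow> bool" where
  "IS_SH_step N R pref \<pi> \<pi>' \<longleftrightarrow>
     (\<exists>i\<in>N. \<exists>T\<in>\<pi> \<union> {{}}. i \<notin> T \<and> \<pi>' = move \<pi> i T \<and>
        strict_pref (pref i) (ratio R (insert i T)) (ratio R (coal \<pi> i)) \<and>
        (\<forall>j\<in>T. pref j (ratio R (insert i T)) (ratio R T)) \<and>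
        (homogeneous N R (insert i T) \<longrightarrow> insert i T = {i}))"

end

theory Submission
  imports Defs
begin

text \<open>Starting from the singleton partition, every coalition stays a star: a singleton, or one
  agent (the centre) of one colour together with leaves of the other colour, where a centre with
  \<open>k \<ge> 2\<close> leaves prefers \<open>k\<close> leaves to \<open>k - 1\<close>. Solitary homogeneity forbids joining a singleton
  of one's own colour, a centre refuses a second agent of its colour, and by single-peakedness a
  centre never leaves; so a deviator is a singleton or a leaf, and it becomes one.

  An integer potential of size \<open>O(n\<^sup>4)\<close> grows with every deviation. Its dominant part counts
  \<open>2 s\<^sup>2\<close> for each star with \<open>s\<close> leaves; for a singleton, and for a leaf of a star larger than it
  likes, it adds four times the largest star size that the agent likes but ranks below its present
  coalition (offset by the leaf's share of the star weight). Its minor part is the preference rank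
  of the present fraction of these agents. A deviation raises the deviator's dominant part unless
  its old and new positions are both of this kind, and then it raises its rank; the other agents of
  the two coalitions never lower the dominant part, and the minor part of at most two agents falls,
  by less than the weight of the dominant part.\<close>

section \<open>Single-peaked preferences over shares\<close>

definition share :: "nat \<Rightarrow> nat \<Rightarrow> rat" where
  "share a b = of_nat a / of_nat (a + b)"

lemma share_less_iff:
  assumes "1 \<le> a + b" "1 \<le> a' + b'"
  shows "share a b < share a' b' \<longleftrightarrow> a * b' < a' * b"
proof -
  have "share a b < share a' b' \<longleftrightarrow> of_nat a * of_nat (a' + b') < of_nat a' * (of_nat (a + b) :: rat)"
    unfolding share_def using assms by (simp add: divide_less_eq less_divide_eq mult.commute)
  also have "\<dots> \<longleftrightarrow> a * (a' + b') < a' * (a + b)"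
    by (metis of_nat_less_iff of_nat_mult)
  finally show ?thesis by (simp add: algebra_simps)
qed

lemma share_eq_iff:
  assumes "1 \<le> a + b" "1 \<le> a' + b'"
  shows "share a b = share a' b' \<longleftrightarrow> a * b' = a' * b"
proof -
  have "share a b = share a' b' \<longleftrightarrow> of_nat a * of_nat (a' + b') = of_nat a' * (of_nat (a + b) :: rat)"
    unfolding share_def using assms by (simp add: field_simps)
  also have "\<dots> \<longleftrightarrow> a * (a' + b') = a' * (a + b)"
    by (metis of_nat_eq_iff of_nat_mult)
  finally show ?thesis by (simp add: algebra_simps)
qed

lemma share_le_iff:
  assumes "1 \<le> a + b" "1 \<le> a' + b'"
  shows "share a b \<le> share a' b' \<longleftrightarrow> a * b' \<le> a' * b"
  using share_less_iff[OF assms] share_eq_iff[OF assms] by (auto simp: order_le_less)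

lemma one_minus_share: "1 \<le> a + b \<Longrightarrow> 1 - share a b = share b a"
  unfolding share_def by (simp add: field_simps)

lemma linear_order_on'_image:
  assumes lin: "linear_order_on' F P" and into: "f ` D \<subseteq> F" and inj: "inj_on f D"
  shows "linear_order_on' D (\<lambda>x y. P (f x) (f y))"
  unfolding linear_order_on'_def weak_order_on_def
proof (intro conjI ballI impI)
  fix x y z assume "x \<in> D" "y \<in> D" "z \<in> D"
  then have F: "f x \<in> F" "f y \<in> F" "f z \<in> F" using into by auto
  show "P (f x) (f x)" using lin F unfolding linear_order_on'_def weak_order_on_def by blast
  show "P (f x) (f y) \<or> P (f y) (f x)"
    using lin F unfolding linear_order_on'_def weak_order_on_def by blast
  show "P (f x) (f z)" if "P (f x) (f y)" "P (f y) (f z)"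
    using lin F that unfolding linear_order_on'_def weak_order_on_def by blast
  show "x = y" if "P (f x) (f y)" "P (f y) (f x)"
  proof -
    have "f x = f y" using lin F that unfolding linear_order_on'_def by blast
    then show ?thesis using inj \<open>x \<in> D\<close> \<open>y \<in> D\<close> by (simp add: inj_on_eq_iff)
  qed
qed

lemma naturally_single_peaked_image:
  assumes sp: "naturally_single_peaked F P" and into: "f ` D \<subseteq> F"
    and mono: "strict_mono_on D f \<or> strict_antimono_on D f"
  shows "naturally_single_peaked D (\<lambda>x y. P (f x) (f y))"
  unfolding naturally_single_peaked_def strict_pref_def
proof (intro ballI impI)
  fix x y z assume xyz: "x \<in> D" "y \<in> D" "z \<in> D"
    and between: "y < x \<and> z < y \<or> y < z \<and> x < y"
    and strict: "P (f x) (f y) \<and> \<not> P (f y) (f x)"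
  have F: "f x \<in> F" "f y \<in> F" "f z \<in> F" using into xyz by auto
  have "f y < f x \<and> f z < f y \<or> f y < f z \<and> f x < f y"
    using mono xyz between unfolding monotone_on_def by blast
  with sp F strict show "P (f y) (f z)"
    unfolding naturally_single_peaked_def strict_pref_def by blast
qed

text \<open>\<open>Q\<close> is an agent's preference over the share of agents of the other colour in its coalition;
  \<open>n_own\<close> and \<open>n_oth\<close> count all agents of its own and of the other colour.\<close>
locale share_agent =
  fixes Q :: "rat \<Rightarrow> rat \<Rightarrow> bool" and D :: "rat set" and n_own n_oth :: nat
  assumes linear: "linear_order_on' D Q"
    and single_peaked: "naturally_single_peaked D Q"
    and D_eq: "D = {share c a | c a. c \<le> n_oth \<and> a \<le> n_own \<and> 1 \<le> c + a}"
begin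

abbreviation strict (infix "\<succ>" 50) where "x \<succ> y \<equiv> strict_pref Q x y"

lemma share_in_D: "c \<le> n_oth \<Longrightarrow> a \<le> n_own \<Longrightarrow> 1 \<le> c + a \<Longrightarrow> share c a \<in> D"
  using D_eq by blast

lemma D_subset_image: "D \<subseteq> (\<lambda>(c, a). share c a) ` ({0..n_oth} \<times> {0..n_own})"
  using D_eq by auto

lemma finite_D: "finite D"
  using D_subset_image by (rule finite_subset) auto

lemma card_D_le: "card D \<le> (n_oth + 1) * (n_own + 1)"
proof -
  have "card D \<le> card ((\<lambda>(c, a). share c a) ` ({0..n_oth} \<times> {0..n_own}))"
    using D_subset_image by (intro card_mono) auto
  also have "\<dots> \<le> card ({0..n_oth} \<times> {0..n_own})" by (rule card_image_le) auto
  finally show ?thesis by (simp add: card_cartesian_product)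
qed

lemma strict_trans: "x \<in> D \<Longrightarrow> y \<in> D \<Longrightarrow> z \<in> D \<Longrightarrow> x \<succ> y \<Longrightarrow> y \<succ> z \<Longrightarrow> x \<succ> z"
  using linear unfolding strict_pref_def linear_order_on'_def weak_order_on_def by blast

lemma strict_total: "x \<in> D \<Longrightarrow> y \<in> D \<Longrightarrow> x \<noteq> y \<Longrightarrow> x \<succ> y \<or> y \<succ> x"
  using linear unfolding strict_pref_def linear_order_on'_def weak_order_on_def by blast

lemma strict_of_pref: "x \<in> D \<Longrightarrow> y \<in> D \<Longrightarrow> x \<noteq> y \<Longrightarrow> Q x y \<Longrightarrow> x \<succ> y"
  using linear unfolding strict_pref_def linear_order_on'_def by blast

lemma strict_irrefl: "\<not> x \<succ> x"
  unfolding strict_pref_def by blast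

lemma strict_asym: "x \<succ> y \<Longrightarrow> \<not> y \<succ> x"
  unfolding strict_pref_def by blast

lemma strict_not_pref: "x \<succ> y \<Longrightarrow> \<not> Q y x"
  unfolding strict_pref_def by blast

lemma pref_beyond_peak:
  "x \<in> D \<Longrightarrow> y \<in> D \<Longrightarrow> z \<in> D \<Longrightarrow> x < y \<and> y < z \<or> z < y \<and> y < x \<Longrightarrow> x \<succ> y \<Longrightarrow> Q y z"
  using single_peaked unfolding naturally_single_peaked_def by blast

lemma strict_decreasing_above:
  assumes "x \<in> D" "w \<in> D" "z \<in> D" "z' \<in> D"
    and "x \<succ> w" "x < w" "w \<le> z" "z < z'"
  shows "z \<succ> z'"
proof (cases "z = w")
  case True
  then show ?thesis using pref_beyond_peak[of x w z'] strict_of_pref assms by auto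
next
  case False
  then have "w \<succ> z" using pref_beyond_peak[of x w z] strict_of_pref assms by auto
  then show ?thesis using pref_beyond_peak[of w z z'] strict_of_pref assms False by auto
qed

lemma strict_decreasing_below:
  assumes "x \<in> D" "w \<in> D" "z \<in> D" "z' \<in> D"
    and "x \<succ> w" "w < x" "z \<le> w" "z' < z"
  shows "z \<succ> z'"
proof (cases "z = w")
  case True
  then show ?thesis using pref_beyond_peak[of x w z'] strict_of_pref assms by auto
next
  case False
  then have "w \<succ> z" using pref_beyond_peak[of x w z] strict_of_pref assms by auto
  then show ?thesis using pref_beyond_peak[of w z z'] strict_of_pref assms False by auto
qed

end

section \<open>Star sizes an agent likes\<close>

text \<open>A leaf of a star with \<open>y\<close> leaves (the agent among them) has share \<open>share 1 y\<close>.\<close>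
definition likes_star :: "(rat \<Rightarrow> rat \<Rightarrow> bool) \<Rightarrow> nat \<Rightarrow> bool" where
  "likes_star Q y \<longleftrightarrow> y \<le> 1 \<or> strict_pref Q (share 1 y) (share 1 (y - 1))"

text \<open>The liked star sizes form an initial segment on which the preference increases, so this is
  the number of liked star sizes worse than \<open>v\<close>.\<close>
definition stars_below :: "(rat \<Rightarrow> rat \<Rightarrow> bool) \<Rightarrow> nat \<Rightarrow> rat \<Rightarrow> nat" where
  "stars_below Q m v = Max (insert 0 {y \<in> {1..m}. likes_star Q y \<and> strict_pref Q v (share 1 y)})"

definition pref_rank :: "rat set \<Rightarrow> (rat \<Rightarrow> rat \<Rightarrow> bool) \<Rightarrow> rat \<Rightarrow> nat" where
  "pref_rank D Q v = card {w \<in> D. strict_pref Q v w}"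

context share_agent
begin

lemma likes_star_strict_pref:
  assumes "1 \<le> n_oth" "likes_star Q y" "1 \<le> y'" "y' < y" "y \<le> n_own"
  shows "share 1 y \<succ> share 1 y'"
proof -
  have step: "share 1 y \<succ> share 1 (y - 1)" using assms unfolding likes_star_def by auto
  have in_D: "share 1 y \<in> D" "share 1 (y - 1) \<in> D" "share 1 y' \<in> D"
    using assms by (auto intro: share_in_D)
  show ?thesis
  proof (cases "y' = y - 1")
    case False
    have "share 1 (y - 1) \<succ> share 1 y'"
      by (rule strict_decreasing_above[OF in_D(1,2,2,3) step]) (use assms False in \<open>auto simp: share_less_iff share_le_iff\<close>)
    then show ?thesis using strict_trans[OF in_D step] by blast
  qed (use step in simp)
qed

lemma likes_star_downward:
  assumes "1 \<le> n_oth" "likes_star Q y" "y' \<le> y" "y \<le> n_own"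
  shows "likes_star Q y'"
proof (cases "y' \<le> 1 \<or> y' = y")
  case False
  have step: "share 1 y \<succ> share 1 (y - 1)" using assms False unfolding likes_star_def by auto
  have in_D: "share 1 y \<in> D" "share 1 (y - 1) \<in> D" "share 1 y' \<in> D" "share 1 (y' - 1) \<in> D"
    using assms by (auto intro: share_in_D)
  have "share 1 y' \<succ> share 1 (y' - 1)"
    by (rule strict_decreasing_above[OF in_D step]) (use assms False in \<open>auto simp: share_less_iff share_le_iff\<close>)
  then show ?thesis unfolding likes_star_def by simp
qed (use assms in \<open>auto simp: likes_star_def\<close>)

lemma dislikes_star_pref:
  assumes "1 \<le> n_oth" "\<not> likes_star Q y" "y \<le> n_own"
  shows "share 1 (y - 1) \<succ> share 1 y"
proof -
  have "2 \<le> y" using assms unfolding likes_star_def by auto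
  then have "share 1 (y - 1) \<noteq> share 1 y" by (simp add: share_eq_iff)
  moreover have "share 1 (y - 1) \<in> D" "share 1 y \<in> D" using assms by (auto intro: share_in_D)
  ultimately show ?thesis using strict_total assms(2) unfolding likes_star_def by blast
qed

lemma centre_pref_below:
  assumes "1 \<le> n_own" "2 \<le> k" "k \<le> n_oth" and grow: "share k 1 \<succ> share (k - 1) 1"
    and z: "z \<in> D" "z \<le> share (k - 1) 1"
  shows "share k 1 \<succ> z"
proof (cases "z = share (k - 1) 1")
  case False
  have in_D: "share k 1 \<in> D" "share (k - 1) 1 \<in> D" using assms by (auto intro: share_in_D)
  have "share (k - 1) 1 \<succ> z"
    by (rule strict_decreasing_below[OF in_D(1,2,2) z(1) grow]) (use assms False in \<open>auto simp: share_less_iff share_le_iff\<close>)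
  then show ?thesis using strict_trans[OF in_D z(1) grow] by blast
qed (use grow in simp)

lemma centre_pref_shrink:
  assumes "1 \<le> n_own" "3 \<le> k" "k \<le> n_oth" and grow: "share k 1 \<succ> share (k - 1) 1"
  shows "share (k - 1) 1 \<succ> share (k - 2) 1"
proof -
  have in_D: "share k 1 \<in> D" "share (k - 1) 1 \<in> D" "share (k - 2) 1 \<in> D"
    using assms by (auto intro: share_in_D)
  show ?thesis by (rule strict_decreasing_below[OF in_D(1,2,2,3) grow]) (use assms in \<open>auto simp: share_less_iff\<close>)
qed

lemma stars_below_le: "stars_below Q n_own v \<le> n_own"
  unfolding stars_below_def by (auto intro!: Max.boundedI)

lemma stars_below_mono:
  assumes "1 \<le> n_oth" "v \<in> D" "v' \<in> D" "v' \<succ> v"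
  shows "stars_below Q n_own v \<le> stars_below Q n_own v'"
  unfolding stars_below_def
proof (rule Max_mono)
  show "insert 0 {y \<in> {1..n_own}. likes_star Q y \<and> v \<succ> share 1 y}
      \<subseteq> insert 0 {y \<in> {1..n_own}. likes_star Q y \<and> v' \<succ> share 1 y}"
  proof (intro insert_mono subsetI)
    fix y assume y: "y \<in> {y \<in> {1..n_own}. likes_star Q y \<and> v \<succ> share 1 y}"
    then have "share 1 y \<in> D" using assms by (auto intro: share_in_D)
    then show "y \<in> {y \<in> {1..n_own}. likes_star Q y \<and> v' \<succ> share 1 y}"
      using y assms strict_trans[of v' v "share 1 y"] by blast
  qed
qed auto

lemma stars_below_ge:
  assumes "likes_star Q y" "1 \<le> y" "y \<le> n_own" "v \<succ> share 1 y"
  shows "y \<le> stars_below Q n_own v"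
  unfolding stars_below_def using assms by (intro Max_ge) auto

lemma stars_below_less:
  assumes "1 \<le> n_oth" "v \<in> D" "1 \<le> y" "y \<le> n_own" "share 1 y \<succ> v"
  shows "stars_below Q n_own v < y"
proof -
  have "y' < y" if "likes_star Q y'" "y' \<le> n_own" "v \<succ> share 1 y'" for y'
  proof (rule ccontr)
    assume "\<not> y' < y"
    then have "share 1 y' \<succ> share 1 y \<or> y' = y"
      using likes_star_strict_pref[of y' y] assms that by fastforce
    moreover have "share 1 y' \<in> D" "share 1 y \<in> D" using assms that by (auto intro: share_in_D)
    ultimately show False
      using strict_trans[of "share 1 y'" "share 1 y" v] strict_asym assms that by blast
  qed
  then show ?thesis unfolding stars_below_def using assms by (subst Max_less_iff) auto
qed

lemma stars_below_less_disliked: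
  assumes "1 \<le> n_oth" "\<not> likes_star Q y"
  shows "stars_below Q n_own v < y"
proof -
  have "2 \<le> y" using assms unfolding likes_star_def by auto
  moreover have "y' < y" if "likes_star Q y'" "y' \<le> n_own" for y'
    using likes_star_downward[of y' y] assms that by fastforce
  ultimately show ?thesis unfolding stars_below_def by (subst Max_less_iff) auto
qed

lemma pref_rank_less:
  assumes "v \<in> D" "v' \<in> D" "v' \<succ> v"
  shows "pref_rank D Q v < pref_rank D Q v'"
  unfolding pref_rank_def
proof (rule psubset_card_mono)
  show "{w \<in> D. v \<succ> w} \<subset> {w \<in> D. v' \<succ> w}"
    using assms strict_trans[of v' v] strict_irrefl by blast
qed (use finite_D in simp)

lemma pref_rank_le: "pref_rank D Q v \<le> card D"
  unfolding pref_rank_def using finite_D by (intro card_mono) auto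

end

section \<open>Scores of positions\<close>

text \<open>A position \<open>(a, c)\<close>: the agent's coalition has \<open>a\<close> agents of its colour (itself included)
  and \<open>c\<close> of the other colour, so the agent's share is \<open>share c a\<close>.\<close>

definition rank_active :: "(rat \<Rightarrow> rat \<Rightarrow> bool) \<Rightarrow> nat \<Rightarrow> nat \<Rightarrow> bool" where
  "rank_active Q a c \<longleftrightarrow> (a = 1 \<and> c = 0) \<or> (c = 1 \<and> \<not> likes_star Q a)"

definition agent_score :: "(rat \<Rightarrow> rat \<Rightarrow> bool) \<Rightarrow> nat \<Rightarrow> nat \<Rightarrow> nat \<Rightarrow> int" where
  "agent_score Q m a c =
     (if a = 1 \<and> c = 0 then 4 * int (stars_below Q m (share 0 1))
      else if c = 1 \<and> \<not> likes_star Q a then 4 * int (stars_below Q m (share 1 a)) - 4 * int a + 2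
      else 0)"

definition agent_rank :: "rat set \<Rightarrow> (rat \<Rightarrow> rat \<Rightarrow> bool) \<Rightarrow> nat \<Rightarrow> nat \<Rightarrow> int" where
  "agent_rank D Q a c = (if rank_active Q a c then int (pref_rank D Q (share c a)) else 0)"

definition star_weight :: "nat \<Rightarrow> nat \<Rightarrow> int" where
  "star_weight x y = (if x = 1 \<or> y = 1 then 2 * int (x * y) ^ 2 else 0)"

definition leaf_value :: "(rat \<Rightarrow> rat \<Rightarrow> bool) \<Rightarrow> nat \<Rightarrow> nat \<Rightarrow> nat \<Rightarrow> int" where
  "leaf_value Q m a c =
     (if rank_active Q a c then 4 * int (stars_below Q m (share c a)) else 4 * int a - 2)"

lemma star_weight_commute: "star_weight x y = star_weight y x"
  unfolding star_weight_def by (simp add: mult.commute)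

lemma star_weight_nonneg: "0 \<le> star_weight x y"
  unfolding star_weight_def by simp

text \<open>The change of the star weight when an agent joins as a leaf, plus its own score, is
  its leaf value: \<open>2 s\<^sup>2 - 2 (s - 1)\<^sup>2 = 4 s - 2\<close>.\<close>
lemma leaf_value_eq:
  assumes "(a = 1 \<and> c = 0) \<or> (1 \<le> a \<and> c = 1)"
  shows "star_weight a c - star_weight (a - 1) c + agent_score Q m a c = leaf_value Q m a c"
  using assms
  by (auto simp: star_weight_def agent_score_def leaf_value_def rank_active_def likes_star_def
      power2_eq_square of_nat_diff algebra_simps)

context share_agent
begin

lemma leaf_value_gain:
  assumes old: "(a = 1 \<and> c = 0) \<or> (1 \<le> a \<and> c = 1)" "a \<le> n_own" "c \<le> n_oth"
    and new: "(b = 1 \<and> d = 0) \<or> (1 \<le> b \<and> d = 1)" "b \<le> n_own" "d \<le> n_oth"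
    and better: "share d b \<succ> share c a"
  shows "leaf_value Q n_own a c < leaf_value Q n_own b d \<or>
    (rank_active Q a c \<and> rank_active Q b d \<and> leaf_value Q n_own a c \<le> leaf_value Q n_own b d \<and>
     pref_rank D Q (share c a) < pref_rank D Q (share d b))"
proof -
  have oth: "1 \<le> n_oth" using old new better strict_irrefl by auto
  have in_D: "share c a \<in> D" "share d b \<in> D" using old new by (auto intro: share_in_D)
  consider (both) "rank_active Q a c" "rank_active Q b d"
    | (old_active) "rank_active Q a c" "d = 1" "likes_star Q b"
    | (new_active) "c = 1" "likes_star Q a" "rank_active Q b d"
    | (neither) "c = 1" "likes_star Q a" "d = 1" "likes_star Q b"
    using old(1) new(1) unfolding rank_active_def by blast
  then show ?thesis
  proof cases
    case both
    then show ?thesis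
      using stars_below_mono[OF oth in_D better] pref_rank_less[OF in_D better]
      unfolding leaf_value_def by simp
  next
    case old_active
    then have "stars_below Q n_own (share c a) < b"
      using stars_below_less[OF oth in_D(1) _ new(2)] better new(1) by auto
    then show ?thesis using old_active unfolding leaf_value_def rank_active_def by auto
  next
    case new_active
    then have "a \<le> stars_below Q n_own (share d b)"
      using stars_below_ge[OF _ _ old(2), of "share d b"] better old(1) by auto
    then show ?thesis using new_active unfolding leaf_value_def rank_active_def by auto
  next
    case neither
    have "a < b"
    proof (rule ccontr)
      assume "\<not> a < b"
      then have "share 1 a \<succ> share 1 b \<or> a = b"
        using likes_star_strict_pref[OF oth neither(2) _ _ old(2)] new(1) neither by fastforce
      then show False using better neither strict_asym strict_irrefl by auto
    qed
    then show ?thesis using neither unfolding leaf_value_def rank_active_def by auto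
  qed
qed

end

definition position_potential ::
    "int \<Rightarrow> (rat \<Rightarrow> rat \<Rightarrow> bool) \<Rightarrow> rat set \<Rightarrow> nat \<Rightarrow> nat \<Rightarrow> nat \<Rightarrow> int" where
  "position_potential K Q D m a c = K * agent_score Q m a c + agent_rank D Q a c"

lemma position_potential_liked_leaf: "likes_star Q a \<Longrightarrow> position_potential K Q D m a 1 = 0"
  unfolding position_potential_def agent_score_def agent_rank_def rank_active_def by simp

lemma position_potential_centre: "1 \<le> c \<Longrightarrow> position_potential K Q D m 1 c = 0"
  unfolding position_potential_def agent_score_def agent_rank_def rank_active_def likes_star_def
  by simp

lemma position_potential_singleton_nonneg: "0 \<le> K \<Longrightarrow> 0 \<le> position_potential K Q D m 1 0"
  unfolding position_potential_def agent_score_def agent_rank_def by simp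

context share_agent
begin

lemma agent_rank_bounds: "0 \<le> agent_rank D Q a c \<and> agent_rank D Q a c \<le> int (card D)"
  unfolding agent_rank_def using pref_rank_le by simp

lemma position_potential_le:
  assumes "int (card D) \<le> K"
    and "agent_score Q n_own a c < agent_score Q n_own b d \<or>
      (agent_score Q n_own a c \<le> agent_score Q n_own b d \<and> agent_rank D Q a c \<le> agent_rank D Q b d)"
  shows "position_potential K Q D n_own a c \<le> position_potential K Q D n_own b d"
proof -
  have K: "0 \<le> K" using assms(1) by simp
  have ranks: "0 \<le> agent_rank D Q a c" "agent_rank D Q b d \<le> K" "0 \<le> agent_rank D Q b d"
    using agent_rank_bounds[of a c] agent_rank_bounds[of b d] assms(1) by auto
  from assms(2) show ?thesis
  proof (elim disjE conjE)
    assume "agent_score Q n_own a c < agent_score Q n_own b d"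
    then have "K * (agent_score Q n_own a c + 1) \<le> K * agent_score Q n_own b d"
      using K by (intro mult_left_mono) auto
    moreover have "agent_rank D Q a c \<le> K" using agent_rank_bounds[of a c] assms(1) by simp
    ultimately show ?thesis using ranks unfolding position_potential_def by (simp add: distrib_left)
  next
    assume "agent_score Q n_own a c \<le> agent_score Q n_own b d" "agent_rank D Q a c \<le> agent_rank D Q b d"
    then show ?thesis using K unfolding position_potential_def by (simp add: add_mono mult_left_mono)
  qed
qed

lemma position_potential_bounds:
  assumes "0 \<le> K" "a \<le> n_own"
  shows "\<bar>position_potential K Q D n_own a c\<bar> \<le> K * (4 * int n_own + 2) + int (card D)"
proof -
  have "\<bar>agent_score Q n_own a c\<bar> \<le> 4 * int n_own + 2"
    using stars_below_le[of "share 0 1"] stars_below_le[of "share 1 a"] assms(2)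
    unfolding agent_score_def by auto
  then have "\<bar>K * agent_score Q n_own a c\<bar> \<le> K * (4 * int n_own + 2)"
    using assms(1) by (simp add: abs_mult mult_left_mono)
  then show ?thesis using agent_rank_bounds[of a c] unfolding position_potential_def by linarith
qed

lemma leaf_leaving_potential:
  assumes "1 \<le> n_oth" "2 \<le> a" "a \<le> n_own" "int (card D) \<le> K"
  shows "position_potential K Q D n_own a 1 \<le> position_potential K Q D n_own (a - 1) 1"
proof (cases "likes_star Q a")
  case True
  moreover have "likes_star Q (a - 1)" using likes_star_downward assms True by simp
  ultimately show ?thesis
    using position_potential_liked_leaf[of Q a] position_potential_liked_leaf[of Q "a - 1"] by simp
next
  case False
  have "agent_score Q n_own a 1 < agent_score Q n_own (a - 1) 1"
  proof (cases "likes_star Q (a - 1)")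
    case True
    then show ?thesis
      using False stars_below_less_disliked[OF assms(1) False, of "share 1 a"]
      unfolding agent_score_def by auto
  next
    case disliked: False
    have "share 1 (a - 1) \<succ> share 1 a" by (rule dislikes_star_pref[OF assms(1) False assms(3)])
    moreover have "share 1 a \<in> D" "share 1 (a - 1) \<in> D" using assms by (auto intro: share_in_D)
    ultimately have "stars_below Q n_own (share 1 a) \<le> stars_below Q n_own (share 1 (a - 1))"
      using stars_below_mono assms(1) by blast
    then show ?thesis using False disliked assms(2) unfolding agent_score_def by auto
  qed
  then show ?thesis using position_potential_le assms(4) by blast
qed

lemma singleton_joined_potential:
  assumes "1 \<le> n_oth" "1 \<le> n_own" and consent: "Q (share 1 1) (share 0 1)"
  shows "position_potential K Q D n_own 1 0 - int (card D) \<le> 0"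
proof -
  have in_D: "share 1 1 \<in> D" "share 0 1 \<in> D" using assms by (auto intro: share_in_D)
  then have "share 1 1 \<succ> share 0 1" using strict_of_pref consent by (simp add: share_eq_iff)
  then have "stars_below Q n_own (share 0 1) = 0"
    using stars_below_less[OF assms(1) in_D(2), of 1] assms by simp
  then show ?thesis
    using agent_rank_bounds[of 1 0] unfolding position_potential_def agent_score_def by simp
qed

lemma leaf_joined_potential:
  assumes "1 \<le> n_oth" "1 \<le> b" "b + 1 \<le> n_own" and consent: "Q (share 1 (b + 1)) (share 1 b)"
  shows "position_potential K Q D n_own b 1 = 0 \<and> position_potential K Q D n_own (b + 1) 1 = 0"
proof -
  have in_D: "share 1 (b + 1) \<in> D" "share 1 b \<in> D" using assms by (auto intro: share_in_D)
  then have "share 1 (b + 1) \<succ> share 1 b" using strict_of_pref consent by (simp add: share_eq_iff)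
  then have "likes_star Q (b + 1)" unfolding likes_star_def by simp
  moreover then have "likes_star Q b" using likes_star_downward assms by simp
  ultimately show ?thesis
    using position_potential_liked_leaf[of Q b] position_potential_liked_leaf[of Q "b + 1"] by simp
qed

end

section \<open>Colours\<close>

definition colour_class :: "nat set \<Rightarrow> nat \<Rightarrow> nat set" where
  "colour_class R j = (if j \<in> R then R else - R)"

definition n_same :: "nat set \<Rightarrow> nat \<Rightarrow> nat set \<Rightarrow> nat" where
  "n_same R j X = card (X \<inter> colour_class R j)"

definition n_other :: "nat set \<Rightarrow> nat \<Rightarrow> nat set \<Rightarrow> nat" where
  "n_other R j X = card (X - colour_class R j)"

definition other_share :: "nat set \<Rightarrow> nat \<Rightarrow> nat set \<Rightarrow> rat" where
  "other_share R j X = share (n_other R j X) (n_same R j X)"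

definition red_share :: "nat set \<Rightarrow> nat \<Rightarrow> rat \<Rightarrow> rat" where
  "red_share R j v = (if j \<in> R then 1 - v else v)"

definition other_pref :: "nat set \<Rightarrow> (nat \<Rightarrow> rat \<Rightarrow> rat \<Rightarrow> bool) \<Rightarrow> nat \<Rightarrow> rat \<Rightarrow> rat \<Rightarrow> bool" where
  "other_pref R pref j v w \<longleftrightarrow> pref j (red_share R j v) (red_share R j w)"

definition other_fractions :: "nat set \<Rightarrow> nat set \<Rightarrow> nat \<Rightarrow> rat set" where
  "other_fractions N R j =
     {share c a | c a. c \<le> n_other R j N \<and> a \<le> n_same R j N \<and> 1 \<le> c + a}"

lemma colour_class_self: "j \<in> colour_class R j"
  unfolding colour_class_def by simp

lemma colour_class_eq: "i \<in> colour_class R j \<Longrightarrow> colour_class R i = colour_class R j"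
  unfolding colour_class_def by auto

lemma colour_class_opposite: "i \<notin> colour_class R j \<Longrightarrow> colour_class R i = - colour_class R j"
  unfolding colour_class_def by auto

lemma colour_class_sym: "i \<in> colour_class R j \<longleftrightarrow> j \<in> colour_class R i"
  unfolding colour_class_def by auto

lemma n_same_eq: "i \<in> colour_class R j \<Longrightarrow> n_same R i X = n_same R j X"
  and n_other_eq: "i \<in> colour_class R j \<Longrightarrow> n_other R i X = n_other R j X"
  unfolding n_same_def n_other_def by (simp_all add: colour_class_eq)

lemma n_same_opposite: "i \<notin> colour_class R j \<Longrightarrow> n_same R i X = n_other R j X"
  and n_other_opposite: "i \<notin> colour_class R j \<Longrightarrow> n_other R i X = n_same R j X"
  using colour_class_opposite[of i R j] unfolding n_same_def n_other_def by (simp_all add: Diff_eq)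

lemma n_same_plus_n_other: "finite X \<Longrightarrow> n_same R j X + n_other R j X = card X"
  unfolding n_same_def n_other_def by (simp add: card_Int_Diff[symmetric])

lemma n_same_insert:
  "finite X \<Longrightarrow> i \<notin> X \<Longrightarrow> n_same R j (insert i X) = n_same R j X + (if i \<in> colour_class R j then 1 else 0)"
  and n_other_insert:
  "finite X \<Longrightarrow> i \<notin> X \<Longrightarrow> n_other R j (insert i X) = n_other R j X + (if i \<in> colour_class R j then 0 else 1)"
  unfolding n_same_def n_other_def by (simp_all add: insert_Diff_if)

lemma n_same_remove:
  "finite X \<Longrightarrow> i \<in> X \<Longrightarrow> n_same R j (X - {i}) = n_same R j X - (if i \<in> colour_class R j then 1 else 0)"
  and n_other_remove:
  "finite X \<Longrightarrow> i \<in> X \<Longrightarrow> n_other R j (X - {i}) = n_other R j X - (if i \<in> colour_class R j then 0 else 1)"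
proof -
  have "(X - {i}) \<inter> colour_class R j = X \<inter> colour_class R j - {i}"
    "X - {i} - colour_class R j = X - colour_class R j - {i}" by auto
  then show "finite X \<Longrightarrow> i \<in> X \<Longrightarrow> n_same R j (X - {i}) = n_same R j X - (if i \<in> colour_class R j then 1 else 0)"
    "finite X \<Longrightarrow> i \<in> X \<Longrightarrow> n_other R j (X - {i}) = n_other R j X - (if i \<in> colour_class R j then 0 else 1)"
    unfolding n_same_def n_other_def by (simp_all add: card_Diff_singleton_if)
qed

lemma n_same_mono: "finite N \<Longrightarrow> X \<subseteq> N \<Longrightarrow> n_same R j X \<le> n_same R j N"
  and n_other_mono: "finite N \<Longrightarrow> X \<subseteq> N \<Longrightarrow> n_other R j X \<le> n_other R j N"
  unfolding n_same_def n_other_def by (auto intro: card_mono)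

lemma n_same_pos: "finite X \<Longrightarrow> j \<in> X \<Longrightarrow> 1 \<le> n_same R j X"
  unfolding n_same_def using colour_class_self[of j R] by (auto simp: Suc_le_eq card_gt_0_iff)

lemma n_other_pos: "finite X \<Longrightarrow> x \<in> X \<Longrightarrow> x \<notin> colour_class R j \<Longrightarrow> 1 \<le> n_other R j X"
  unfolding n_other_def by (auto simp: Suc_le_eq card_gt_0_iff)

lemma ratio_eq_share: "finite X \<Longrightarrow> ratio R X = share (card (X \<inter> R)) (card (X - R))"
  using card_Int_Diff[of X R] unfolding ratio_def share_def by (simp add: Int_commute)

lemma red_share_other_share:
  assumes "finite X" "X \<noteq> {}"
  shows "red_share R j (other_share R j X) = ratio R X"
proof (cases "j \<in> R")
  case True
  then have counts: "n_same R j X = card (X \<inter> R)" "n_other R j X = card (X - R)"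
    unfolding n_same_def n_other_def colour_class_def by simp_all
  have "1 \<le> card (X - R) + card (X \<inter> R)"
  proof -
    have "1 \<le> card X" using assms by (simp add: Suc_le_eq card_gt_0_iff)
    then show ?thesis using card_Int_Diff[OF assms(1), of R] by linarith
  qed
  then show ?thesis
    using True assms(1) by (simp add: red_share_def other_share_def counts one_minus_share ratio_eq_share)
next
  case False
  then have counts: "n_same R j X = card (X - R)" "n_other R j X = card (X \<inter> R)"
    unfolding n_same_def n_other_def colour_class_def by (simp_all add: Diff_eq)
  then show ?thesis
    using False assms(1) by (simp add: red_share_def other_share_def ratio_eq_share)
qed

lemma pref_ratio_iff:
  "finite X \<Longrightarrow> finite Y \<Longrightarrow> X \<noteq> {} \<Longrightarrow> Y \<noteq> {} \<Longrightarrow>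
    pref j (ratio R X) (ratio R Y) \<longleftrightarrow> other_pref R pref j (other_share R j X) (other_share R j Y)"
  unfolding other_pref_def by (simp add: red_share_other_share)

lemma share_in_fractions: "x \<le> card R \<Longrightarrow> 1 \<le> x + y \<Longrightarrow> x + y \<le> card N \<Longrightarrow> share x y \<in> fractions N R"
  unfolding fractions_def share_def by blast

lemma card_colour_classes:
  assumes "finite N" "R \<subseteq> N"
  shows "card R = (if j \<in> R then n_same R j N else n_other R j N)"
    and "n_same R j N + n_other R j N = card N"
proof -
  have "N \<inter> R = R" "N - - R = R" using assms(2) by auto
  then show "card R = (if j \<in> R then n_same R j N else n_other R j N)"
    unfolding n_same_def n_other_def colour_class_def by simp
qed (rule n_same_plus_n_other[OF assms(1)])

lemma red_share_other_fractions:
  assumes "finite N" "R \<subseteq> N"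
  shows "red_share R j ` other_fractions N R j \<subseteq> fractions N R"
proof
  fix v assume "v \<in> red_share R j ` other_fractions N R j"
  then obtain c a where v: "v = red_share R j (share c a)"
    and ca: "c \<le> n_other R j N" "a \<le> n_same R j N" "1 \<le> c + a"
    unfolding other_fractions_def by blast
  show "v \<in> fractions N R"
  proof (cases "j \<in> R")
    case True
    then have "v = share a c" using v ca(3) by (simp add: red_share_def one_minus_share)
    then show ?thesis
      using True ca card_colour_classes[OF assms, of j] by (auto intro!: share_in_fractions)
  next
    case False
    then show ?thesis
      using v ca card_colour_classes[OF assms, of j]
      by (auto simp: red_share_def intro!: share_in_fractions)
  qed
qed

lemma red_share_monotone:
  "strict_mono_on V (red_share R j) \<or> strict_antimono_on V (red_share R j)"
proof (cases "j \<in> R")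
  case True
  then have "strict_antimono_on V (red_share R j)" by (simp add: red_share_def monotone_on_def)
  then show ?thesis ..
next
  case False
  then have "strict_mono_on V (red_share R j)" by (simp add: red_share_def monotone_on_def)
  then show ?thesis ..
qed

lemma share_agent_other_pref:
  assumes game: "strict_nsp_hdg N R pref" and "j \<in> N"
  shows "share_agent (other_pref R pref j) (other_fractions N R j) (n_same R j N) (n_other R j N)"
proof
  have lin: "linear_order_on' (fractions N R) (pref j)"
    and sp: "naturally_single_peaked (fractions N R) (pref j)"
    and into: "red_share R j ` other_fractions N R j \<subseteq> fractions N R"
    using game assms(2) red_share_other_fractions by (auto simp: strict_nsp_hdg_def)
  have inj: "inj_on (red_share R j) (other_fractions N R j)"
    unfolding inj_on_def red_share_def by auto
  have pref_eq: "other_pref R pref j = (\<lambda>v w. pref j (red_share R j v) (red_share R j w))"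
    by (simp add: other_pref_def fun_eq_iff)
  show "linear_order_on' (other_fractions N R j) (other_pref R pref j)"
    unfolding pref_eq by (rule linear_order_on'_image[OF lin into inj])
  show "naturally_single_peaked (other_fractions N R j) (other_pref R pref j)"
    unfolding pref_eq by (rule naturally_single_peaked_image[OF sp into red_share_monotone])
qed (simp add: other_fractions_def)

definition fraction_bound :: "nat set \<Rightarrow> nat" where
  "fraction_bound N = (card N + 1) ^ 2"

lemma card_other_fractions:
  assumes "strict_nsp_hdg N R pref" "j \<in> N"
  shows "card (other_fractions N R j) \<le> fraction_bound N"
proof -
  interpret share_agent "other_pref R pref j" "other_fractions N R j" "n_same R j N" "n_other R j N"
    by (rule share_agent_other_pref[OF assms])
  have "finite N" "R \<subseteq> N" using assms(1) by (auto simp: strict_nsp_hdg_def)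
  then have "n_same R j N + n_other R j N = card N" by (rule card_colour_classes(2))
  then have "n_same R j N \<le> card N" "n_other R j N \<le> card N" by linarith+
  then have "(n_other R j N + 1) * (n_same R j N + 1) \<le> (card N + 1) * (card N + 1)"
    by (intro mult_mono) auto
  then show ?thesis using card_D_le unfolding fraction_bound_def power2_eq_square by linarith
qed

section \<open>Star coalitions and the potential\<close>

definition star_coalition :: "nat set \<Rightarrow> nat set \<Rightarrow> (nat \<Rightarrow> rat \<Rightarrow> rat \<Rightarrow> bool) \<Rightarrow> nat set \<Rightarrow> bool" where
  "star_coalition N R pref X \<longleftrightarrow> X \<subseteq> N \<and> X \<noteq> {} \<and>
     (\<forall>j\<in>X. n_same R j X = 1 \<or> n_other R j X = 1) \<and>
     (\<forall>j\<in>X. n_same R j X = 1 \<and> 2 \<le> n_other R j X \<longrightarrow>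
        strict_pref (other_pref R pref j) (share (n_other R j X) 1) (share (n_other R j X - 1) 1))"

definition star_partition :: "nat set \<Rightarrow> nat set \<Rightarrow> (nat \<Rightarrow> rat \<Rightarrow> rat \<Rightarrow> bool) \<Rightarrow> nat set set \<Rightarrow> bool" where
  "star_partition N R pref P \<longleftrightarrow> is_partition N P \<and> (\<forall>X\<in>P. star_coalition N R pref X)"

lemma star_coalition_finite: "finite N \<Longrightarrow> star_coalition N R pref X \<Longrightarrow> finite X"
  unfolding star_coalition_def using finite_subset by blast

lemma star_coalition_counts:
  assumes "star_coalition N R pref X"
  shows "n_same R i X = 1 \<or> n_other R i X = 1"
proof -
  obtain j where j: "j \<in> X" "n_same R j X = 1 \<or> n_other R j X = 1"
    using assms unfolding star_coalition_def by blast
  show ?thesis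
  proof (cases "i \<in> colour_class R j")
    case True
    then show ?thesis using j n_same_eq n_other_eq by metis
  next
    case False
    then show ?thesis using j n_same_opposite n_other_opposite by metis
  qed
qed

lemma singleton_star_coalition: "i \<in> N \<Longrightarrow> star_coalition N R pref {i}"
proof -
  have "{i} \<inter> colour_class R i = {i}" "{i} - colour_class R i = {}" using colour_class_self by blast+
  then show "i \<in> N \<Longrightarrow> star_coalition N R pref {i}"
    unfolding star_coalition_def n_same_def n_other_def by simp
qed

text \<open>The score weight exceeds the total loss of ranks in one deviation, which is at most
  two fractions' ranks: the deviator's and that of a singleton it joins.\<close>
definition score_weight :: "nat set \<Rightarrow> int" where
  "score_weight N = 2 * int (fraction_bound N) + 1"

definition agent_potential ::
    "nat set \<Rightarrow> nat set \<Rightarrow> (nat \<Rightarrow> rat \<Rightarrow> rat \<Rightarrow> bool) \<Rightarrow> nat \<Rightarrow> nat set \<Rightarrow> int" where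
  "agent_potential N R pref j X = position_potential (score_weight N) (other_pref R pref j)
     (other_fractions N R j) (n_same R j N) (n_same R j X) (n_other R j X)"

definition coalition_potential :: "nat set \<Rightarrow> nat set \<Rightarrow> (nat \<Rightarrow> rat \<Rightarrow> rat \<Rightarrow> bool) \<Rightarrow> nat set \<Rightarrow> int" where
  "coalition_potential N R pref X = score_weight N * star_weight (card (X \<inter> R)) (card (X - R))
     + (\<Sum>j\<in>X. agent_potential N R pref j X)"

definition potential :: "nat set \<Rightarrow> nat set \<Rightarrow> (nat \<Rightarrow> rat \<Rightarrow> rat \<Rightarrow> bool) \<Rightarrow> nat set set \<Rightarrow> int" where
  "potential N R pref P = (\<Sum>X\<in>P. coalition_potential N R pref X)"

lemma coalition_potential_empty: "coalition_potential N R pref {} = 0"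
  unfolding coalition_potential_def star_weight_def by simp

lemma star_weight_colours: "star_weight (card (X \<inter> R)) (card (X - R)) = star_weight (n_same R i X) (n_other R i X)"
proof (cases "i \<in> R")
  case True
  then show ?thesis unfolding n_same_def n_other_def colour_class_def by simp
next
  case False
  then show ?thesis
    unfolding n_same_def n_other_def colour_class_def by (simp add: Diff_eq star_weight_commute)
qed

section \<open>A single deviation\<close>

locale star_deviation =
  fixes N R :: "nat set" and pref :: "nat \<Rightarrow> rat \<Rightarrow> rat \<Rightarrow> bool" and i :: nat and C T :: "nat set"
  assumes game: "strict_nsp_hdg N R pref"
    and source: "star_coalition N R pref C" "i \<in> C"
    and target: "T = {} \<or> star_coalition N R pref T" "C \<inter> T = {}"
    and improves: "strict_pref (other_pref R pref i) (other_share R i (insert i T)) (other_share R i C)"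
    and accepted: "\<forall>j\<in>T. other_pref R pref j (other_share R j (insert i T)) (other_share R j T)"
    and solitary: "homogeneous N R (insert i T) \<longrightarrow> insert i T = {i}"
begin

lemma finite_N: "finite N"
  using game by (simp add: strict_nsp_hdg_def)

lemma finite_C: "finite C"
  by (rule star_coalition_finite[OF finite_N source(1)])

lemma finite_T: "finite T"
  using target(1) star_coalition_finite[OF finite_N] by blast

lemma C_subset: "C \<subseteq> N"
  using source(1) by (simp add: star_coalition_def)

lemma joined_subset: "insert i T \<subseteq> N"
  using target(1) C_subset source(2) by (auto simp: star_coalition_def)

lemma i_notin_T: "i \<notin> T"
  using target(2) source(2) by blast

lemma share_agent_at: "j \<in> N \<Longrightarrow>
    share_agent (other_pref R pref j) (other_fractions N R j) (n_same R j N) (n_other R j N)"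
  by (rule share_agent_other_pref[OF game])

lemma card_fractions_at: "j \<in> N \<Longrightarrow> int (card (other_fractions N R j)) \<le> score_weight N"
  using card_other_fractions[OF game] unfolding score_weight_def by fastforce

lemmas joined_counts = n_same_insert[OF finite_T i_notin_T] n_other_insert[OF finite_T i_notin_T]
lemmas remaining_counts = n_same_remove[OF finite_C source(2)] n_other_remove[OF finite_C source(2)]

lemma bounds_N: "n_same R j X \<le> n_same R j N" "n_other R j X \<le> n_other R j N" if "X \<subseteq> N"
  using n_same_mono[OF finite_N that] n_other_mono[OF finite_N that] by auto

lemma target_not_same_singleton: "\<not> (n_same R i T = 1 \<and> n_other R i T = 0)"
proof
  assume counts: "n_same R i T = 1 \<and> n_other R i T = 0"
  then have "T - colour_class R i = {}" "T \<noteq> {}"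
    using finite_T unfolding n_same_def n_other_def by auto
  then have "insert i T \<subseteq> colour_class R i" using colour_class_self by blast
  then have "homogeneous N R (insert i T)"
    using joined_subset unfolding homogeneous_def colour_class_def by (auto split: if_splits)
  then show False using solitary i_notin_T \<open>T \<noteq> {}\<close> by blast
qed

lemma target_not_rival_centre: "\<not> (n_same R i T = 1 \<and> 2 \<le> n_other R i T)"
proof
  assume counts: "n_same R i T = 1 \<and> 2 \<le> n_other R i T"
  then have "T \<inter> colour_class R i \<noteq> {}" unfolding n_same_def by auto
  then obtain c where c: "c \<in> T" "c \<in> colour_class R i" by blast
  then have i_c: "i \<in> colour_class R c" using colour_class_sym by blast
  have star: "star_coalition N R pref T" using target(1) c(1) by blast
  define k where "k = n_other R i T"
  have c_counts: "n_same R c T = 1" "n_other R c T = k"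
    using counts n_same_eq[OF c(2)] n_other_eq[OF c(2)] k_def by auto
  have c_joined: "n_same R c (insert i T) = 2" "n_other R c (insert i T) = k"
    using joined_counts(1)[of R c] joined_counts(2)[of R c] c_counts i_c by auto
  have cN: "c \<in> N" using joined_subset c(1) by blast
  interpret share_agent "other_pref R pref c" "other_fractions N R c" "n_same R c N" "n_other R c N"
    by (rule share_agent_at[OF cN])
  have grow: "strict_pref (other_pref R pref c) (share k 1) (share (k - 1) 1)"
    using star c(1) c_counts counts k_def unfolding star_coalition_def by auto
  have bounds: "2 \<le> n_same R c N" "k \<le> n_other R c N"
    using bounds_N[OF joined_subset, of c] c_joined by auto
  have "strict_pref (other_pref R pref c) (share k 1) (share k 2)"
  proof (rule centre_pref_below[OF _ _ bounds(2) grow])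
    show "share k 2 \<in> other_fractions N R c" using bounds by (intro share_in_D) auto
    show "share k 2 \<le> share (k - 1) 1" using counts k_def by (subst share_le_iff) auto
  qed (use bounds counts k_def in auto)
  moreover have "other_pref R pref c (share k 2) (share k 1)"
    using accepted c(1) c_counts c_joined unfolding other_share_def by auto
  ultimately show False using strict_not_pref by blast
qed

lemma target_shape: "(n_same R i T = 0 \<and> n_other R i T = 0) \<or> n_other R i T = 1"
proof (cases "T = {}")
  case True
  then show ?thesis unfolding n_same_def n_other_def by simp
next
  case False
  then have "n_same R i T = 1 \<or> n_other R i T = 1"
    using target(1) star_coalition_counts by blast
  then show ?thesis using target_not_same_singleton target_not_rival_centre by linarith
qed

lemma source_not_centre: "\<not> (n_same R i C = 1 \<and> 2 \<le> n_other R i C)"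
proof
  assume counts: "n_same R i C = 1 \<and> 2 \<le> n_other R i C"
  define k where "k = n_other R i C"
  have iN: "i \<in> N" using joined_subset by blast
  interpret share_agent "other_pref R pref i" "other_fractions N R i" "n_same R i N" "n_other R i N"
    by (rule share_agent_at[OF iN])
  have grow: "strict_pref (other_pref R pref i) (share k 1) (share (k - 1) 1)"
    using source counts k_def unfolding star_coalition_def by auto
  have new: "n_same R i (insert i T) = n_same R i T + 1" "n_other R i (insert i T) = n_other R i T"
    using joined_counts(1)[of R i] joined_counts(2)[of R i] colour_class_self by auto
  have bounds: "n_same R i T + 1 \<le> n_same R i N" "n_other R i T \<le> n_other R i N" "k \<le> n_other R i N"
    using bounds_N[OF joined_subset, of i] bounds_N[OF C_subset, of i] new k_def by auto
  have "strict_pref (other_pref R pref i) (share k 1) (share (n_other R i T) (n_same R i T + 1))"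
  proof (rule centre_pref_below[OF _ _ bounds(3) grow])
    show "share (n_other R i T) (n_same R i T + 1) \<in> other_fractions N R i"
      using bounds by (intro share_in_D) auto
    have "n_other R i T \<le> 1" using target_shape by auto
    then show "share (n_other R i T) (n_same R i T + 1) \<le> share (k - 1) 1"
      using counts k_def by (subst share_le_iff) (auto intro: le_trans[OF _ mult_le_mono])
  qed (use bounds counts k_def in auto)
  moreover have "strict_pref (other_pref R pref i) (share (n_other R i T) (n_same R i T + 1)) (share k 1)"
    using improves new counts k_def unfolding other_share_def by simp
  ultimately show False using strict_asym by blast
qed

lemma source_shape: "(n_same R i C = 1 \<and> n_other R i C = 0) \<or> (1 \<le> n_same R i C \<and> n_other R i C = 1)"
  using star_coalition_counts[OF source(1), of i] source_not_centre n_same_pos[OF finite_C source(2), of R]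
  by linarith

lemma source_leaf:
  assumes "C - {i} \<noteq> {}"
  shows "1 \<le> n_same R i C" "n_other R i C = 1"
proof -
  have "\<not> (n_same R i C = 1 \<and> n_other R i C = 0)"
  proof
    assume "n_same R i C = 1 \<and> n_other R i C = 0"
    then have "card C = 1" using n_same_plus_n_other[OF finite_C, of R i] by simp
    then have "C = {i}" using source(2) by (metis card_1_singletonE singletonD)
    then show False using assms by simp
  qed
  then show "1 \<le> n_same R i C" "n_other R i C = 1" using source_shape by auto
qed

lemma remaining_centre_pref:
  assumes j: "j \<in> C - {i}" and centre: "n_same R j (C - {i}) = 1" "2 \<le> n_other R j (C - {i})"
  shows "strict_pref (other_pref R pref j) (share (n_other R j (C - {i})) 1)
      (share (n_other R j (C - {i}) - 1) 1)"
proof -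
  have leaf: "1 \<le> n_same R i C" "n_other R i C = 1" using source_leaf j by blast+
  have opposite: "i \<notin> colour_class R j"
    using centre remaining_counts(2)[of R j] n_other_eq[of i R j] leaf by auto
  define k where "k = n_same R i C"
  have j_counts: "n_same R j C = 1" "n_other R j C = k" "n_other R j (C - {i}) = k - 1"
    using n_same_opposite[OF opposite] n_other_opposite[OF opposite] remaining_counts[of R j]
      opposite leaf k_def by auto
  have jN: "j \<in> N" using C_subset j by blast
  interpret share_agent "other_pref R pref j" "other_fractions N R j" "n_same R j N" "n_other R j N"
    by (rule share_agent_at[OF jN])
  have "3 \<le> k" using centre j_counts by simp
  moreover have "strict_pref (other_pref R pref j) (share k 1) (share (k - 1) 1)"
    using source(1) j j_counts \<open>3 \<le> k\<close> unfolding star_coalition_def by auto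
  moreover have "1 \<le> n_same R j N" "k \<le> n_other R j N"
    using bounds_N[OF C_subset, of j] j_counts by auto
  ultimately show ?thesis using centre_pref_shrink j_counts by (simp add: numeral_2_eq_2)
qed

lemma remaining_star:
  assumes "C - {i} \<noteq> {}"
  shows "star_coalition N R pref (C - {i})"
proof -
  have leaf: "1 \<le> n_same R i C" "n_other R i C = 1" by (rule source_leaf[OF assms])+
  have counts: "n_same R j (C - {i}) = 1 \<or> n_other R j (C - {i}) = 1" for j
  proof (cases "i \<in> colour_class R j")
    case True
    then show ?thesis using remaining_counts(2)[of R j] n_other_eq[OF True] leaf by auto
  next
    case False
    then have j_i: "j \<notin> colour_class R i" using colour_class_sym by blast
    show ?thesis using remaining_counts(1)[of R j] n_same_opposite[OF j_i] False leaf by auto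
  qed
  show ?thesis
    unfolding star_coalition_def using C_subset assms counts remaining_centre_pref by auto
qed

lemma joined_centre_pref:
  assumes j: "j \<in> insert i T"
    and centre: "n_same R j (insert i T) = 1" "2 \<le> n_other R j (insert i T)"
  shows "strict_pref (other_pref R pref j) (share (n_other R j (insert i T)) 1)
      (share (n_other R j (insert i T) - 1) 1)"
proof -
  have opposite: "i \<notin> colour_class R j"
    using centre joined_counts[of R j] n_other_eq[of i R j] target_shape by auto
  then have jT: "j \<in> T" and j_i: "j \<notin> colour_class R i"
    using j colour_class_self colour_class_sym by blast+
  define b where "b = n_same R i T"
  have j_counts: "n_other R j T = b" "n_other R j (insert i T) = b + 1" "n_same R j (insert i T) = 1"
    using n_same_opposite[OF opposite] n_other_opposite[OF opposite] joined_counts[of R j]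
      opposite centre b_def by auto
  have jN: "j \<in> N" using joined_subset jT by blast
  interpret share_agent "other_pref R pref j" "other_fractions N R j" "n_same R j N" "n_other R j N"
    by (rule share_agent_at[OF jN])
  have "n_same R j T = n_other R i T" by (rule n_same_opposite[OF j_i])
  moreover have "1 \<le> n_other R i T" using n_other_pos[OF finite_T jT j_i] .
  ultimately have "n_same R j T = 1" using target_shape by linarith
  then have "other_pref R pref j (share (b + 1) 1) (share b 1)"
    using accepted jT j_counts unfolding other_share_def by auto
  moreover have "share (b + 1) 1 \<in> other_fractions N R j" "share b 1 \<in> other_fractions N R j"
    using bounds_N[OF joined_subset, of j] j_counts by (auto intro: share_in_D)
  ultimately show ?thesis using strict_of_pref j_counts by (simp add: share_eq_iff)
qed

lemma joined_star: "star_coalition N R pref (insert i T)"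
proof -
  have counts: "n_same R j (insert i T) = 1 \<or> n_other R j (insert i T) = 1" if "j \<in> insert i T" for j
  proof (cases "i \<in> colour_class R j")
    case True
    then show ?thesis
      using joined_counts[of R j] n_same_eq[OF True] n_other_eq[OF True] target_shape by auto
  next
    case False
    then have "j \<in> T" "j \<notin> colour_class R i" using that colour_class_self colour_class_sym by blast+
    then have "1 \<le> n_other R i T" using n_other_pos[OF finite_T] by blast
    then show ?thesis
      using False joined_counts[of R j] n_same_opposite[OF \<open>j \<notin> colour_class R i\<close>] target_shape
      by auto
  qed
  show ?thesis
    unfolding star_coalition_def using joined_subset counts joined_centre_pref by auto
qed

lemma remaining_same_colour_gain:
  assumes j: "j \<in> C - {i}" and same: "i \<in> colour_class R j"
  shows "agent_potential N R pref j C \<le> agent_potential N R pref j (C - {i})"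
proof -
  have jN: "j \<in> N" using C_subset j by blast
  interpret share_agent "other_pref R pref j" "other_fractions N R j" "n_same R j N" "n_other R j N"
    by (rule share_agent_at[OF jN])
  define a where "a = n_same R i C"
  have "{i, j} \<subseteq> C \<inter> colour_class R j" using j source(2) same colour_class_self by auto
  then have "card {i, j} \<le> n_same R j C"
    unfolding n_same_def using finite_C by (intro card_mono) auto
  then have "2 \<le> n_same R j C" using j by simp
  then have counts: "n_same R j C = a" "n_other R j C = 1" "2 \<le> a"
    using n_same_eq[OF same] n_other_eq[OF same] source_shape a_def by auto
  then have after: "n_same R j (C - {i}) = a - 1" "n_other R j (C - {i}) = 1"
    using remaining_counts[of R j] same by auto
  have "1 \<le> n_other R j N" "a \<le> n_same R j N" using bounds_N[OF C_subset, of j] counts by auto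
  then show ?thesis
    using leaf_leaving_potential[OF _ counts(3) _ card_fractions_at[OF jN]] counts after
    unfolding agent_potential_def by simp
qed

lemma remaining_other_colour_gain:
  assumes j: "j \<in> C - {i}" and other: "i \<notin> colour_class R j"
  shows "agent_potential N R pref j C \<le> agent_potential N R pref j (C - {i})"
proof -
  define a where "a = n_same R i C"
  have j_i: "j \<notin> colour_class R i" using other colour_class_sym by blast
  then have "1 \<le> n_other R i C" using n_other_pos[OF finite_C] j by blast
  then have "n_other R i C = 1" "1 \<le> a" using source_shape a_def by auto
  then have counts: "n_same R j C = 1" "n_other R j C = a"
    "n_same R j (C - {i}) = 1" "n_other R j (C - {i}) = a - 1"
    using n_same_opposite[OF j_i] n_other_opposite[OF j_i] remaining_counts[of R j] other a_def
    by auto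
  show ?thesis
  proof (cases "a = 1")
    case True
    then show ?thesis
      using counts position_potential_centre[of 1] position_potential_singleton_nonneg
        score_weight_def unfolding agent_potential_def by simp
  next
    case False
    then show ?thesis
      using counts \<open>1 \<le> a\<close> position_potential_centre[of a] position_potential_centre[of "a - 1"]
      unfolding agent_potential_def by simp
  qed
qed

lemma remaining_gain:
  "0 \<le> (\<Sum>j\<in>C - {i}. agent_potential N R pref j (C - {i}) - agent_potential N R pref j C)"
proof (rule sum_nonneg)
  fix j assume "j \<in> C - {i}"
  then show "0 \<le> agent_potential N R pref j (C - {i}) - agent_potential N R pref j C"
    using remaining_same_colour_gain[of j] remaining_other_colour_gain[of j]
    by (cases "i \<in> colour_class R j") simp_all
qed

lemma joined_singleton_gain:
  assumes singleton: "n_same R i T = 0" "n_other R i T = 1"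
  shows "- int (fraction_bound N)
    \<le> (\<Sum>j\<in>T. agent_potential N R pref j (insert i T) - agent_potential N R pref j T)"
proof -
  have "card T = 1" using singleton n_same_plus_n_other[OF finite_T, of R i] by simp
  then obtain x where T: "T = {x}" using card_1_singletonE by blast
  have x_i: "x \<notin> colour_class R i"
    using singleton T unfolding n_same_def by (auto simp: card_eq_0_iff)
  then have "i \<notin> colour_class R x" using colour_class_sym by blast
  then have counts: "n_same R x T = 1" "n_other R x T = 0"
    "n_same R x (insert i T) = 1" "n_other R x (insert i T) = 1"
    using singleton n_same_opposite[OF x_i] n_other_opposite[OF x_i] joined_counts[of R x] by auto
  have xN: "x \<in> N" using joined_subset T by blast
  interpret share_agent "other_pref R pref x" "other_fractions N R x" "n_same R x N" "n_other R x N"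
    by (rule share_agent_at[OF xN])
  have "other_pref R pref x (share 1 1) (share 0 1)"
    using accepted T counts unfolding other_share_def by auto
  moreover have "1 \<le> n_same R x N" "1 \<le> n_other R x N"
    using bounds_N[OF joined_subset, of x] counts by auto
  ultimately have "position_potential (score_weight N) (other_pref R pref x) (other_fractions N R x)
      (n_same R x N) 1 0 - int (card (other_fractions N R x)) \<le> 0"
    using singleton_joined_potential by blast
  then show ?thesis
    using T counts position_potential_centre[of 1] card_other_fractions[OF game xN]
    unfolding agent_potential_def by simp
qed

lemma joined_same_colour_gain:
  assumes j: "j \<in> T" and same: "i \<in> colour_class R j"
  shows "agent_potential N R pref j T \<le> agent_potential N R pref j (insert i T)"
proof -
  have jN: "j \<in> N" using joined_subset j by blast
  interpret share_agent "other_pref R pref j" "other_fractions N R j" "n_same R j N" "n_other R j N"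
    by (rule share_agent_at[OF jN])
  define b where "b = n_same R i T"
  have "1 \<le> b" using n_same_pos[OF finite_T j, of R] n_same_eq[OF same] b_def by simp
  then have "n_other R i T = 1" using target_shape b_def by auto
  then have counts: "n_same R j T = b" "n_other R j T = 1"
    "n_same R j (insert i T) = b + 1" "n_other R j (insert i T) = 1"
    using n_same_eq[OF same] n_other_eq[OF same] joined_counts[of R j] same b_def by auto
  have "other_pref R pref j (share 1 (b + 1)) (share 1 b)"
    using accepted j counts unfolding other_share_def by auto
  moreover have "1 \<le> n_other R j N" "b + 1 \<le> n_same R j N"
    using bounds_N[OF joined_subset, of j] counts by auto
  ultimately show ?thesis
    using leaf_joined_potential \<open>1 \<le> b\<close> counts unfolding agent_potential_def by simp
qed

lemma joined_other_colour_gain: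
  assumes j: "j \<in> T" and other: "i \<notin> colour_class R j"
    and not_singleton: "\<not> (n_same R i T = 0 \<and> n_other R i T = 1)"
  shows "agent_potential N R pref j T \<le> agent_potential N R pref j (insert i T)"
proof -
  define b where "b = n_same R i T"
  have j_i: "j \<notin> colour_class R i" using other colour_class_sym by blast
  then have "1 \<le> n_other R i T" using n_other_pos[OF finite_T j] by blast
  then have "n_other R i T = 1" "1 \<le> b" using target_shape not_singleton b_def by auto
  then have counts: "n_same R j T = 1" "n_other R j T = b"
    "n_same R j (insert i T) = 1" "n_other R j (insert i T) = b + 1"
    using n_same_opposite[OF j_i] n_other_opposite[OF j_i] joined_counts[of R j] other b_def by auto
  then show ?thesis
    using \<open>1 \<le> b\<close> position_potential_centre[of b] position_potential_centre[of "b + 1"]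
    unfolding agent_potential_def by simp
qed

lemma joined_gain:
  "- (if n_same R i T = 0 \<and> n_other R i T = 1 then int (fraction_bound N) else 0)
     \<le> (\<Sum>j\<in>T. agent_potential N R pref j (insert i T) - agent_potential N R pref j T)"
proof (cases "n_same R i T = 0 \<and> n_other R i T = 1")
  case True
  then show ?thesis using joined_singleton_gain by simp
next
  case False
  have "0 \<le> agent_potential N R pref j (insert i T) - agent_potential N R pref j T" if "j \<in> T" for j
    using joined_same_colour_gain[OF that] joined_other_colour_gain[OF that _ False]
    by (cases "i \<in> colour_class R j") simp_all
  then have "0 \<le> (\<Sum>j\<in>T. agent_potential N R pref j (insert i T) - agent_potential N R pref j T)"
    by (rule sum_nonneg)
  then show ?thesis using False by simp
qed

lemma deviator_gain:
  defines "Q \<equiv> other_pref R pref i" and "D \<equiv> other_fractions N R i" and "m \<equiv> n_same R i N"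
    and "a \<equiv> n_same R i C" and "c \<equiv> n_other R i C" and "b \<equiv> n_same R i T + 1" and "d \<equiv> n_other R i T"
  shows "1 + (if b = 1 \<and> d = 1 then int (fraction_bound N) else 0)
    \<le> score_weight N * (leaf_value Q m b d - leaf_value Q m a c) + (agent_rank D Q b d - agent_rank D Q a c)"
proof -
  have iN: "i \<in> N" using joined_subset by blast
  interpret share_agent Q D m "n_other R i N"
    unfolding Q_def D_def m_def by (rule share_agent_at[OF iN])
  have new: "n_same R i (insert i T) = b" "n_other R i (insert i T) = d"
    using joined_counts[of R i] colour_class_self b_def d_def by auto
  have old_shape: "(a = 1 \<and> c = 0) \<or> (1 \<le> a \<and> c = 1)"
    using source_shape a_def c_def by simp
  have new_shape: "(b = 1 \<and> d = 0) \<or> (1 \<le> b \<and> d = 1)"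
    using target_shape b_def d_def by auto
  have bounds: "a \<le> m" "c \<le> n_other R i N" "b \<le> m" "d \<le> n_other R i N"
    using bounds_N[OF C_subset, of i] bounds_N[OF joined_subset, of i] new
    unfolding a_def c_def m_def by auto
  have better: "share d b \<succ> share c a"
    using improves new unfolding other_share_def Q_def a_def c_def by simp
  have M: "int (card D) \<le> int (fraction_bound N)"
    using card_other_fractions[OF game iN] unfolding D_def by simp
  have ranks: "0 \<le> agent_rank D Q a c" "agent_rank D Q a c \<le> int (fraction_bound N)"
      "0 \<le> agent_rank D Q b d" "agent_rank D Q b d \<le> int (fraction_bound N)"
    using agent_rank_bounds[of a c] agent_rank_bounds[of b d] M by auto
  have K: "score_weight N = 2 * int (fraction_bound N) + 1" by (rule score_weight_def)
  from leaf_value_gain[OF old_shape bounds(1,2) new_shape bounds(3,4) better] show ?thesis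
  proof (elim disjE conjE)
    assume "leaf_value Q m a c < leaf_value Q m b d"
    then have "score_weight N * 1 \<le> score_weight N * (leaf_value Q m b d - leaf_value Q m a c)"
      using K by (intro mult_left_mono) auto
    moreover have "(if b = 1 \<and> d = 1 then int (fraction_bound N) else 0) \<le> int (fraction_bound N)"
      by simp
    ultimately show ?thesis using ranks K by linarith
  next
    assume active: "rank_active Q a c" "rank_active Q b d"
      and "leaf_value Q m a c \<le> leaf_value Q m b d" "pref_rank D Q (share c a) < pref_rank D Q (share d b)"
    then have "0 \<le> score_weight N * (leaf_value Q m b d - leaf_value Q m a c)"
      using K by simp
    moreover have "(if b = 1 \<and> d = 1 then int (fraction_bound N) else 0) = 0"
      using active(2) unfolding rank_active_def likes_star_def by auto
    ultimately show ?thesis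
      using active \<open>pref_rank D Q (share c a) < pref_rank D Q (share d b)\<close>
      unfolding agent_rank_def by simp
  qed
qed

lemma coalition_potential_change:
  defines "K \<equiv> score_weight N" and "Q \<equiv> other_pref R pref i" and "D \<equiv> other_fractions N R i"
    and "m \<equiv> n_same R i N" and "a \<equiv> n_same R i C" and "c \<equiv> n_other R i C"
    and "b \<equiv> n_same R i T + 1" and "d \<equiv> n_other R i T"
  shows "coalition_potential N R pref (C - {i}) + coalition_potential N R pref (insert i T)
      - coalition_potential N R pref C - coalition_potential N R pref T
    = K * (leaf_value Q m b d - leaf_value Q m a c) + (agent_rank D Q b d - agent_rank D Q a c)
      + (\<Sum>j\<in>C - {i}. agent_potential N R pref j (C - {i}) - agent_potential N R pref j C)
      + (\<Sum>j\<in>T. agent_potential N R pref j (insert i T) - agent_potential N R pref j T)"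
proof -
  have new: "n_same R i (insert i T) = b" "n_other R i (insert i T) = d"
    using joined_counts[of R i] colour_class_self b_def d_def by auto
  have remaining: "n_same R i (C - {i}) = a - 1" "n_other R i (C - {i}) = c"
    using remaining_counts[of R i] colour_class_self a_def c_def by auto
  have pot_i: "agent_potential N R pref i X = K * agent_score Q m (n_same R i X) (n_other R i X)
      + agent_rank D Q (n_same R i X) (n_other R i X)" for X
    unfolding agent_potential_def position_potential_def K_def Q_def D_def m_def ..
  have weight: "star_weight (card (X \<inter> R)) (card (X - R)) = star_weight (n_same R i X) (n_other R i X)"
    for X by (rule star_weight_colours)
  have old_value: "star_weight a c - star_weight (a - 1) c + agent_score Q m a c = leaf_value Q m a c"
    using source_shape a_def c_def by (intro leaf_value_eq) simp
  have new_value: "star_weight b d - star_weight (b - 1) d + agent_score Q m b d = leaf_value Q m b d"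
    using target_shape b_def d_def by (intro leaf_value_eq) auto
  have C_split: "coalition_potential N R pref C = K * star_weight a c + agent_potential N R pref i C
      + (\<Sum>j\<in>C - {i}. agent_potential N R pref j C)"
    unfolding coalition_potential_def K_def weight a_def c_def
    using sum.remove[OF finite_C source(2)] by simp
  have T_split: "coalition_potential N R pref (insert i T) = K * star_weight b d
      + agent_potential N R pref i (insert i T) + (\<Sum>j\<in>T. agent_potential N R pref j (insert i T))"
    unfolding coalition_potential_def K_def weight new using sum.insert[OF finite_T i_notin_T] by simp
  show ?thesis
    unfolding C_split T_split sum_subtractf pot_i new old_value[symmetric] new_value[symmetric]
    by (simp add: coalition_potential_def K_def weight remaining b_def d_def algebra_simps
        flip: a_def c_def)
qed

lemma coalition_potential_gain:
  "coalition_potential N R pref C + coalition_potential N R pref T + 1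
    \<le> coalition_potential N R pref (C - {i}) + coalition_potential N R pref (insert i T)"
  using coalition_potential_change deviator_gain remaining_gain joined_gain by (simp split: if_splits)

end

section \<open>The dynamics\<close>

lemma coal_eq:
  assumes "is_partition N P" "C \<in> P" "i \<in> C"
  shows "coal P i = C"
  unfolding coal_def
proof (rule the_equality)
  fix X assume "X \<in> P \<and> i \<in> X"
  moreover have "\<forall>X\<in>P. \<forall>Y\<in>P. X \<noteq> Y \<longrightarrow> X \<inter> Y = {}"
    using assms(1) by (simp add: is_partition_def)
  ultimately show "X = C" using assms(2,3) by blast
qed (use assms in simp)

context
  fixes P :: "nat set set" and i :: nat and C T :: "nat set"
  assumes parts: "{} \<notin> P" "\<forall>X\<in>P. \<forall>Y\<in>P. X \<noteq> Y \<longrightarrow> X \<inter> Y = {}"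
    and C: "C \<in> P" "i \<in> C" "coal P i = C" and T: "T \<in> P \<or> T = {}" "i \<notin> T"
begin

lemma mem_move_iff:
  "X \<in> move P i T \<longleftrightarrow> (X \<in> P \<and> X \<noteq> C \<and> X \<noteq> T) \<or> (X = C - {i} \<and> X \<noteq> {}) \<or> X = insert i T"
  unfolding move_def C(3) by auto

lemma disjoint_from_move:
  assumes "X \<in> P" "X \<noteq> C" "X \<noteq> T"
  shows "X \<inter> (C - {i}) = {}" "X \<inter> insert i T = {}"
proof -
  have "X \<inter> C = {}" using parts(2) assms(1,2) C(1) by blast
  moreover have "X \<inter> T = {}" using parts(2) assms(1,3) T(1) by blast
  ultimately show "X \<inter> (C - {i}) = {}" "X \<inter> insert i T = {}" using C(2) by blast+
qed

lemma sum_move: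
  fixes h :: "nat set \<Rightarrow> int"
  assumes "finite P" "h {} = 0"
  shows "sum h (move P i T) + h C + h T = sum h P + h (C - {i}) + h (insert i T)"
proof -
  define A where "A = P - {C, T}"
  have fin: "finite A" using assms(1) unfolding A_def by simp
  have C_rest: "C - {i} \<notin> A"
  proof
    assume "C - {i} \<in> A"
    then have "C - {i} \<in> P" "C - {i} \<noteq> C" "C - {i} \<noteq> T" unfolding A_def by blast+
    then have "(C - {i}) \<inter> (C - {i}) = {}" by (rule disjoint_from_move(1))
    then show False using parts(1) \<open>C - {i} \<in> P\<close> by (metis Int_absorb)
  qed
  have joined: "insert i T \<notin> insert (C - {i}) A"
    using disjoint_from_move(2)[of "insert i T"] unfolding A_def by blast
  have "sum h (move P i T) = h (insert i T) + h (C - {i}) + sum h A"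
  proof (cases "C - {i} = {}")
    case True
    then have "move P i T = insert (insert i T) A" unfolding move_def C(3) A_def by simp
    moreover have "h (C - {i}) = 0" unfolding True by (rule assms(2))
    ultimately show ?thesis using fin joined by simp
  next
    case False
    then have "move P i T = insert (insert i T) (insert (C - {i}) A)"
      unfolding move_def C(3) A_def by simp
    then show ?thesis using fin joined C_rest by simp
  qed
  moreover have "sum h P = h C + h T + sum h A"
  proof (cases "T = {}")
    case True
    then have "P = insert C A" using C(1) parts(1) unfolding A_def by blast
    moreover have "C \<notin> A" unfolding A_def by simp
    ultimately show ?thesis using fin True assms(2) by simp
  next
    case False
    then have "P = insert C (insert T A)" "C \<noteq> T" using C(1,2) T unfolding A_def by blast+
    moreover have "C \<notin> A" "T \<notin> A" unfolding A_def by simp_all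
    ultimately show ?thesis using fin by simp
  qed
  ultimately show ?thesis by simp
qed

lemma move_partition:
  assumes "\<Union>P = N"
  shows "is_partition N (move P i T)"
  unfolding is_partition_def
proof (intro conjI ballI impI)
  show "{} \<notin> move P i T" using parts(1) mem_move_iff[of "{}"] by simp
  have "X \<subseteq> N" if "X \<in> move P i T" for X
    using that assms C(1,2) T(1) unfolding mem_move_iff by auto
  moreover have "N \<subseteq> \<Union>(move P i T)"
  proof
    fix x assume "x \<in> N"
    then obtain X where X: "X \<in> P" "x \<in> X" using assms by blast
    consider "X = C" "x = i" | "X = C" "x \<noteq> i" | "X = T" | "X \<noteq> C" "X \<noteq> T" by blast
    then show "x \<in> \<Union>(move P i T)"
    proof cases
      case 2
      then have "C - {i} \<in> move P i T" using X(2) mem_move_iff by blast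
      then show ?thesis using 2 X(2) by blast
    next
      case 4
      then have "X \<in> move P i T" using X(1) mem_move_iff by blast
      then show ?thesis using X(2) by blast
    qed (use X(2) mem_move_iff[of "insert i T"] in auto)
  qed
  ultimately show "\<Union>(move P i T) = N" by blast
next
  fix X Y assume XY: "X \<in> move P i T" "Y \<in> move P i T" "X \<noteq> Y"
  have new: "(C - {i}) \<inter> insert i T = {}" using parts(2) C T by blast
  from XY(1,2) show "X \<inter> Y = {}"
    unfolding mem_move_iff
  proof (elim disjE conjE)
  qed (use XY(3) new disjoint_from_move parts(2) in \<open>simp_all add: Int_commute, blast+\<close>)
qed

end

lemma IS_SH_step_star_deviation:
  assumes game: "strict_nsp_hdg N R pref" and star: "star_partition N R pref P"
    and step: "IS_SH_step N R pref P P'"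
  obtains i C T where "star_deviation N R pref i C T" "C \<in> P" "coal P i = C" "T \<in> P \<or> T = {}"
    "P' = move P i T"
proof -
  have part: "is_partition N P" and stars: "\<forall>X\<in>P. star_coalition N R pref X"
    using star by (auto simp: star_partition_def)
  have fin: "finite N" using game by (simp add: strict_nsp_hdg_def)
  obtain i T where i: "i \<in> N" and T: "T \<in> P \<or> T = {}" "i \<notin> T" and P': "P' = move P i T"
    and improves: "strict_pref (pref i) (ratio R (insert i T)) (ratio R (coal P i))"
    and accepted: "\<forall>j\<in>T. pref j (ratio R (insert i T)) (ratio R T)"
    and solitary: "homogeneous N R (insert i T) \<longrightarrow> insert i T = {i}"
    using step unfolding IS_SH_step_def by blast
  obtain C where C: "C \<in> P" "i \<in> C" using i part by (auto simp: is_partition_def)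
  have coal: "coal P i = C" by (rule coal_eq[OF part C])
  have fin_C: "finite C" using star_coalition_finite[OF fin] stars C(1) by blast
  have fin_T: "finite T" using star_coalition_finite[OF fin] stars T(1) by blast
  have "star_deviation N R pref i C T"
  proof
    show "T = {} \<or> star_coalition N R pref T" using T(1) stars by blast
    show "C \<inter> T = {}" using part C T unfolding is_partition_def by blast
    show "strict_pref (other_pref R pref i) (other_share R i (insert i T)) (other_share R i C)"
      using improves pref_ratio_iff[OF finite_insert[THEN iffD2, OF fin_T] fin_C]
        pref_ratio_iff[OF fin_C finite_insert[THEN iffD2, OF fin_T]] C(2)
      unfolding coal strict_pref_def by blast
    show "\<forall>j\<in>T. other_pref R pref j (other_share R j (insert i T)) (other_share R j T)"
      using accepted pref_ratio_iff[OF finite_insert[THEN iffD2, OF fin_T] fin_T] by blast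
  qed (use game C stars solitary in auto)
  then show ?thesis using that C(1) coal T(1) P' by blast
qed

lemma star_partition_step:
  assumes game: "strict_nsp_hdg N R pref" and star: "star_partition N R pref P"
    and step: "IS_SH_step N R pref P P'"
  shows "star_partition N R pref P' \<and> potential N R pref P + 1 \<le> potential N R pref P'"
proof -
  obtain i C T where dev: "star_deviation N R pref i C T" and C: "C \<in> P" "coal P i = C"
    and T: "T \<in> P \<or> T = {}" and P': "P' = move P i T"
    using IS_SH_step_star_deviation[OF assms] .
  interpret star_deviation N R pref i C T by (rule dev)
  have parts: "{} \<notin> P" "\<forall>X\<in>P. \<forall>Y\<in>P. X \<noteq> Y \<longrightarrow> X \<inter> Y = {}" "\<Union>P = N"
    and stars: "\<forall>X\<in>P. star_coalition N R pref X"
    using star by (auto simp: star_partition_def is_partition_def)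
  have fin_P: "finite P" using parts(3) finite_N by (metis finite_UnionD)
  note move_facts = parts(1,2) C(1) source(2) C(2) T i_notin_T
  have "star_partition N R pref P'"
    unfolding star_partition_def P'
    using move_partition[OF move_facts parts(3)] mem_move_iff[OF move_facts] stars remaining_star joined_star
    by auto
  moreover have "potential N R pref P + 1 \<le> potential N R pref P'"
    using sum_move[OF move_facts fin_P, of "coalition_potential N R pref", OF coalition_potential_empty]
      coalition_potential_gain
    unfolding potential_def P' by simp
  ultimately show ?thesis ..
qed

lemma star_partition_singletons: "star_partition N R pref (singleton_partition N)"
  unfolding star_partition_def is_partition_def singleton_partition_def
  using singleton_star_coalition by auto

lemma star_weight_le: "star_weight x y \<le> 2 * int (x + y) ^ 2"
  unfolding star_weight_def by (auto simp: power_mono)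

lemma abs_agent_potential_le:
  assumes game: "strict_nsp_hdg N R pref" and "j \<in> N" "X \<subseteq> N"
  shows "\<bar>agent_potential N R pref j X\<bar>
    \<le> score_weight N * (4 * int (card N) + 2) + int (fraction_bound N)"
proof -
  interpret share_agent "other_pref R pref j" "other_fractions N R j" "n_same R j N" "n_other R j N"
    by (rule share_agent_other_pref[OF assms(1,2)])
  have fin: "finite N" using game by (simp add: strict_nsp_hdg_def)
  have "n_same R j N \<le> card N" using n_same_plus_n_other[OF fin, of R j] by linarith
  moreover have "n_same R j X \<le> n_same R j N" using n_same_mono[OF fin assms(3)] .
  moreover have "0 \<le> score_weight N" unfolding score_weight_def by simp
  ultimately show ?thesis
    using position_potential_bounds[of "score_weight N" "n_same R j X" "n_other R j X"]
      card_other_fractions[OF assms(1,2)] mult_left_mono[of "4 * int (n_same R j N) + 2" "4 * int (card N) + 2"]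
    unfolding agent_potential_def by fastforce
qed

definition coalition_bound :: "nat set \<Rightarrow> int" where
  "coalition_bound N = score_weight N * (6 * int (card N) + 2) + int (fraction_bound N)"

lemma abs_coalition_potential_le:
  assumes game: "strict_nsp_hdg N R pref" and star: "star_coalition N R pref X"
  shows "\<bar>coalition_potential N R pref X\<bar> \<le> int (card X) * coalition_bound N"
proof -
  have fin: "finite N" using game by (simp add: strict_nsp_hdg_def)
  have sub: "X \<subseteq> N" using star by (simp add: star_coalition_def)
  have fin_X: "finite X" using star_coalition_finite[OF fin star] .
  have K: "0 \<le> score_weight N" unfolding score_weight_def by simp
  have "star_weight (card (X \<inter> R)) (card (X - R)) \<le> 2 * int (card X) ^ 2"
    using star_weight_le card_Int_Diff[OF fin_X, of R] by simp
  also have "\<dots> \<le> 2 * int (card X) * int (card N)"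
    using card_mono[OF fin sub] by (simp add: power2_eq_square mult_left_mono)
  finally have weight: "\<bar>score_weight N * star_weight (card (X \<inter> R)) (card (X - R))\<bar>
      \<le> score_weight N * (2 * int (card X) * int (card N))"
    using K star_weight_nonneg by (simp add: abs_mult mult_left_mono)
  have "\<bar>\<Sum>j\<in>X. agent_potential N R pref j X\<bar> \<le> (\<Sum>j\<in>X. \<bar>agent_potential N R pref j X\<bar>)"
    by (rule sum_abs)
  also have "\<dots> \<le> (\<Sum>j\<in>X. score_weight N * (4 * int (card N) + 2) + int (fraction_bound N))"
    using abs_agent_potential_le[OF game _ sub] sub by (intro sum_mono) blast
  finally have agents: "\<bar>\<Sum>j\<in>X. agent_potential N R pref j X\<bar>
      \<le> int (card X) * (score_weight N * (4 * int (card N) + 2) + int (fraction_bound N))"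
    by simp
  show ?thesis
    using weight agents unfolding coalition_potential_def coalition_bound_def by (simp add: algebra_simps)
qed

lemma abs_potential_le:
  assumes game: "strict_nsp_hdg N R pref" and star: "star_partition N R pref P"
  shows "\<bar>potential N R pref P\<bar> \<le> int (card N) * coalition_bound N"
proof -
  have fin: "finite N" using game by (simp add: strict_nsp_hdg_def)
  have part: "is_partition N P" and stars: "\<forall>X\<in>P. star_coalition N R pref X"
    using star by (auto simp: star_partition_def)
  then have "\<Union>P = N" "pairwise disjnt P"
    unfolding is_partition_def pairwise_def disjnt_def by auto
  moreover have "\<And>X. X \<in> P \<Longrightarrow> finite X" using stars star_coalition_finite[OF fin] by blast
  ultimately have card_N: "card N = (\<Sum>X\<in>P. card X)" using card_Union_disjoint by metis
  have "\<bar>potential N R pref P\<bar> \<le> (\<Sum>X\<in>P. \<bar>coalition_potential N R pref X\<bar>)"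
    unfolding potential_def by (rule sum_abs)
  also have "\<dots> \<le> (\<Sum>X\<in>P. int (card X) * coalition_bound N)"
    using abs_coalition_potential_le[OF game] stars by (intro sum_mono) blast
  finally show ?thesis by (simp add: card_N sum_distrib_right)
qed

lemma dynamics_potential:
  assumes game: "strict_nsp_hdg N R pref" and start: "ps 0 = singleton_partition N"
    and steps: "\<forall>t<k. IS_SH_step N R pref (ps t) (ps (Suc t))"
  shows "t \<le> k \<Longrightarrow> star_partition N R pref (ps t) \<and> potential N R pref (ps 0) + int t \<le> potential N R pref (ps t)"
proof (induction t)
  case 0
  then show ?case using start star_partition_singletons[of N R pref] by simp
next
  case (Suc t)
  then have before: "star_partition N R pref (ps t)"
    and gain: "potential N R pref (ps 0) + int t \<le> potential N R pref (ps t)" by simp_all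
  have "IS_SH_step N R pref (ps t) (ps (Suc t))" using steps Suc.prems by simp
  then have "star_partition N R pref (ps (Suc t)) \<and> potential N R pref (ps t) + 1 \<le> potential N R pref (ps (Suc t))"
    by (rule star_partition_step[OF game before])
  then show ?case using gain by simp
qed

definition step_bound :: "nat \<Rightarrow> real" where
  "step_bound n = 2 * n * ((2 * (n + 1) ^ 2 + 1) * (6 * n + 2) + (n + 1) ^ 2)"

lemma step_bound_eq: "step_bound n = 24 * real n ^ 4 + 58 * real n ^ 3 + 56 * real n ^ 2 + 14 * real n"
  unfolding step_bound_def by (simp add: algebra_simps power2_eq_square power3_eq_cube power4_eq_xxxx)

lemma step_bound_bigo: "step_bound \<in> O(\<lambda>n. real n ^ 5)"
proof (rule bigoI[where c = 152])
  show "\<forall>\<^sub>F n in at_top. norm (step_bound n) \<le> 152 * norm (real n ^ 5)"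
  proof (rule eventually_at_top_linorderI[where c = 1])
    fix n :: nat assume "1 \<le> n"
    then have n: "(1::real) \<le> real n" by simp
    have "real n ^ k \<le> real n ^ 5" if "k \<le> 5" for k using power_increasing[OF that n] .
    note powers = this[of 1, unfolded power_one_right] this[of 2] this[of 3] this[of 4]
    have "norm (step_bound n) = 24 * real n ^ 4 + 58 * real n ^ 3 + 56 * real n ^ 2 + 14 * real n"
      unfolding step_bound_eq by simp
    moreover have "norm (real n ^ 5) = real n ^ 5" by simp
    ultimately show "norm (step_bound n) \<le> 152 * norm (real n ^ 5)"
      using powers by linarith
  qed
qed

theorem theorem4p4:
  shows "\<exists>f :: nat \<Rightarrow> real. f \<in> O(\<lambda>n. real n ^ 5) \<and>
    (\<forall>N R pref. strict_nsp_hdg N R pref \<longrightarrow>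
      (\<forall>(k::nat) (ps :: nat \<Rightarrow> nat set set).
         ps 0 = singleton_partition N \<and> (\<forall>t<k. IS_SH_step N R pref (ps t) (ps (Suc t)))
         \<longrightarrow> real k \<le> f (card N)))"
proof (intro exI[of _ step_bound] conjI allI impI)
  show "step_bound \<in> O(\<lambda>n. real n ^ 5)" by (rule step_bound_bigo)
next
  fix N R pref k and ps :: "nat \<Rightarrow> nat set set"
  assume game: "strict_nsp_hdg N R pref"
    and run: "ps 0 = singleton_partition N \<and> (\<forall>t<k. IS_SH_step N R pref (ps t) (ps (Suc t)))"
  have first: "star_partition N R pref (ps 0)" and last: "star_partition N R pref (ps k)"
    and gain: "potential N R pref (ps 0) + int k \<le> potential N R pref (ps k)"
    using dynamics_potential[OF game, of ps k 0] dynamics_potential[OF game, of ps k k] run by simp_all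
  have "int k \<le> 2 * int (card N) * coalition_bound N"
    using gain abs_potential_le[OF game first] abs_potential_le[OF game last] by linarith
  then have "real_of_int (int k) \<le> real_of_int (2 * int (card N) * coalition_bound N)"
    by (simp only: of_int_le_iff)
  moreover have "real_of_int (2 * int (card N) * coalition_bound N) = step_bound (card N)"
    unfolding coalition_bound_def score_weight_def fraction_bound_def step_bound_def
    by (simp add: algebra_simps)
  ultimately show "real k \<le> step_bound (card N)" by simp
qed

end
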